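(* (a) If $\eta_{ss}$ is smooth and $G$ is the Green function defined by $G_{ss}(s,x)-\lvert\eta_{ss}(s)\rvert^2G(s,x)=-\delta(s-x)$, $G(0,x)=0$, $G_s(1,x)=0$, then $\sup_{0\le s,x\le1}\lvert G_s(s,x)\rvert\le1$ and $\sup_{0<s\le 1,\,0\le x\le1}G(s,x)/s\le1$. (b) Let $n\in\mathbb{N}$, $\eta_1,\dots,\eta_{n+1}\in\mathbb{R}^d$ with $\eta_{n+1}=0$ and $\lvert(\nabla_+\eta)_k\rvert=1$ for $1\le k\le n$, and assume $\alpha_k=\langle(\nabla_+\eta)_{k+1},(\nabla_+\eta)_k\rangle\ge0$ for $1\le k\le n-1$. Let $G_{kj}$ be the discrete Green function $G_{kj}=\frac1n\sum_{i=1}^{\min\{j,k\}}\frac{p_{ij}p_{ik}}{\beta_i}$, $p_{ij}=\prod_{m=i}^{j-1}\frac{\alpha_m}{\beta_{m+1}}$, $\beta_n=1$, $\beta_i=2-\alpha_i^2/\beta_{i+1}$, and set $G_{0j}=0$. Then for all $1\le j,k\le n$: $\lvert n(G_{kj}-G_{k-1,j})\rvert\le1$ and $nG_{kj}/k\le1$.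
   Context: $(\nabla_+f)_k=n(f_{k+1}-f_k)$; empty products equal $1$. $\delta$ is the Dirac delta. *)

theory Defs
  imports "HOL-Analysis.Analysis"
begin

definition smooth_with_derivs :: "(nat \<Rightarrow> real \<Rightarrow> 'a::euclidean_space) \<Rightarrow> (real \<Rightarrow> 'a) \<Rightarrow> bool" where
  "smooth_with_derivs D eta \<longleftrightarrow> D 0 = eta \<and>
     (\<forall>k. \<forall>s\<in>{0..1}. (D k has_vector_derivative D (Suc k) s) (at s within {0..1}))"

text \<open>G is the Green function of  G_ss - q G = -delta(s-x), G(0,x)=0, G_s(1,x)=0 on [0,1].\<close>
definition green_fun :: "(real \<Rightarrow> real) \<Rightarrow> (real \<Rightarrow> real \<Rightarrow> real) \<Rightarrow> (real \<Rightarrow> real \<Rightarrow> real)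
    \<Rightarrow> (real \<Rightarrow> real \<Rightarrow> real) \<Rightarrow> bool" where
  "green_fun q G GL GR \<longleftrightarrow> (\<forall>x\<in>{0..1}.
     (\<forall>s\<in>{0..x}. ((\<lambda>t. G t x) has_real_derivative GL s x) (at s within {0..x}) \<and>
                 ((\<lambda>t. GL t x) has_real_derivative q s * G s x) (at s within {0..x})) \<and>
     (\<forall>s\<in>{x..1}. ((\<lambda>t. G t x) has_real_derivative GR s x) (at s within {x..1}) \<and>
                 ((\<lambda>t. GR t x) has_real_derivative q s * G s x) (at s within {x..1})) \<and>
     G 0 x = 0 \<and> GR 1 x = 0 \<and> GR x x - GL x x = -1)"

definition dgrad :: "nat \<Rightarrow> (nat \<Rightarrow> 'a::real_vector) \<Rightarrow> nat \<Rightarrow> 'a" where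
  "dgrad n f k = real n *\<^sub>R (f (Suc k) - f k)"

definition dalpha :: "nat \<Rightarrow> (nat \<Rightarrow> 'a::real_inner) \<Rightarrow> nat \<Rightarrow> real" where
  "dalpha n eta k = inner (dgrad n eta (Suc k)) (dgrad n eta k)"

text \<open>betaAux al n t = beta_(n-t); beta_n = 1, beta_i = 2 - al_i^2 / beta_(i+1).\<close>
fun betaAux :: "(nat \<Rightarrow> real) \<Rightarrow> nat \<Rightarrow> nat \<Rightarrow> real" where
  "betaAux al n 0 = 1"
| "betaAux al n (Suc t) = 2 - (al (n - Suc t))\<^sup>2 / betaAux al n t"

definition dbeta :: "(nat \<Rightarrow> real) \<Rightarrow> nat \<Rightarrow> nat \<Rightarrow> real" where
  "dbeta al n i = betaAux al n (n - i)"

definition dp :: "(nat \<Rightarrow> real) \<Rightarrow> nat \<Rightarrow> nat \<Rightarrow> nat \<Rightarrow> real" where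
  "dp al n i j = (\<Prod>m\<in>{i..<j}. al m / dbeta al n (Suc m))"

definition dgreen :: "(nat \<Rightarrow> real) \<Rightarrow> nat \<Rightarrow> nat \<Rightarrow> nat \<Rightarrow> real" where
  "dgreen al n k j = (if k = 0 then 0 else
     (1 / real n) * (\<Sum>i\<in>{1..min j k}. dp al n i j * dp al n i k / dbeta al n i))"

end

theory Submission
  imports Defs
begin

text \<open>
  Both parts are maximum-principle arguments.  Of the hypotheses on eta, part (a) only
  uses that the potential q = |eta_ss|^2 is nonnegative and part (b) only uses that
  0 \<le> alpha_k \<le> 1.

  (a) Fix x and write g = G(.,x), with one-sided slopes gl on [0,x] and gr on [x,1].
  Because g'' = q g with q \<ge> 0, the "energy" g g' has derivative g'^2 + q g^2 \<ge> 0,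
  so it is increasing; as it vanishes at s = 0 and s = 1 it is \<ge> 0 left of x and
  \<le> 0 right of x.  Hence g^2 increases up to x and decreases after it, which
  forces g \<ge> 0, so g is convex and the slopes are monotone.  The boundary values
  together with the jump gr(x) - gl(x) = -1 then pin the slopes into [0,1] and [-1,0],
  and g(s) \<le> s follows by integrating the slope bound.

  (b) With rho_m = alpha_m / beta_(m+1) and S_k = sum_(i\<le>k) p_ik^2 / beta_i one has
  n G_kj = p_kj S_k for k \<le> j and n G_kj = p_jk S_j for j \<le> k.  The hypotheses give
  0 \<le> alpha \<le> 1, hence beta \<ge> 1 and 0 \<le> rho_m \<le> alpha_m.  Two inductions give
  (beta_k - 1) S_k \<le> 1 and its propagation p_jm S_j (beta_m - 1) \<le> 1; these bound each
  increment of k \<mapsto> n G_kj by 1, and telescoping from G_0j = 0 gives n G_kj \<le> k.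
\<close>

(* Monotonicity on a closed interval from one-sided derivatives (the library
  versions require two-sided derivatives at every point). *)
lemma deriv_nonneg_imp_mono_Icc:
  fixes f f' :: "real \<Rightarrow> real"
  assumes deriv: "\<And>s. s \<in> {a..b} \<Longrightarrow> (f has_real_derivative f' s) (at s within {a..b})"
    and nonneg: "\<And>s. s \<in> {a..b} \<Longrightarrow> 0 \<le> f' s"
    and order: "a \<le> s" "s \<le> t" "t \<le> b"
  shows "f s \<le> f t"
proof -
  have "continuous_on {a..b} f"
    using deriv by (intro DERIV_continuous_on) auto
  then have "continuous_on {s..t} f"
    by (rule continuous_on_subset) (use order in auto)
  moreover have "\<exists>y. DERIV f z :> y \<and> 0 \<le> y" if "s < z" "z < t" for z
  proof -
    have "at z within {a..b} = at z"
      using that order by (intro at_within_Icc_at) auto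
    then show ?thesis
      using deriv[of z] nonneg[of z] that order by auto
  qed
  ultimately show ?thesis
    using DERIV_nonneg_imp_increasing_open[of s t f] order by blast
qed

lemma deriv_nonpos_imp_anti_Icc:
  fixes f f' :: "real \<Rightarrow> real"
  assumes deriv: "\<And>s. s \<in> {a..b} \<Longrightarrow> (f has_real_derivative f' s) (at s within {a..b})"
    and nonpos: "\<And>s. s \<in> {a..b} \<Longrightarrow> f' s \<le> 0"
    and order: "a \<le> s" "s \<le> t" "t \<le> b"
  shows "f t \<le> f s"
  using deriv_nonneg_imp_mono_Icc[of a b "\<lambda>x. - f x" "\<lambda>x. - f' x" s t] deriv nonpos order
  by (auto intro: DERIV_minus)

locale green_profile =
  fixes q g gl gr :: "real \<Rightarrow> real" and x :: real
  assumes x_unit: "0 \<le> x" "x \<le> 1"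
    and q_nonneg: "\<And>s. s \<in> {0..1} \<Longrightarrow> 0 \<le> q s"
    and g_deriv_left: "\<And>s. s \<in> {0..x} \<Longrightarrow> (g has_real_derivative gl s) (at s within {0..x})"
    and gl_deriv: "\<And>s. s \<in> {0..x} \<Longrightarrow> (gl has_real_derivative q s * g s) (at s within {0..x})"
    and g_deriv_right: "\<And>s. s \<in> {x..1} \<Longrightarrow> (g has_real_derivative gr s) (at s within {x..1})"
    and gr_deriv: "\<And>s. s \<in> {x..1} \<Longrightarrow> (gr has_real_derivative q s * g s) (at s within {x..1})"
    and g_0: "g 0 = 0" and gr_1: "gr 1 = 0" and jump: "gr x - gl x = -1"
begin

lemma q_nonneg_left: "s \<in> {0..x} \<Longrightarrow> 0 \<le> q s"
  and q_nonneg_right: "s \<in> {x..1} \<Longrightarrow> 0 \<le> q s"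
  using q_nonneg x_unit by auto

(* The energy g g' increases (its derivative is g'^2 + q g^2) and vanishes at 0. *)
lemma left_energy_nonneg:
  assumes "s \<in> {0..x}" shows "0 \<le> g s * gl s"
proof -
  have "g 0 * gl 0 \<le> g s * gl s"
  proof (rule deriv_nonneg_imp_mono_Icc[where a = 0 and b = x and f = "\<lambda>t. g t * gl t"
        and f' = "\<lambda>t. (gl t)\<^sup>2 + q t * (g t)\<^sup>2"])
    fix t assume t: "t \<in> {0..x}"
    show "((\<lambda>t. g t * gl t) has_real_derivative (gl t)\<^sup>2 + q t * (g t)\<^sup>2) (at t within {0..x})"
      by (rule DERIV_cong[OF DERIV_mult'[OF g_deriv_left[OF t] gl_deriv[OF t]]])
         (simp add: power2_eq_square algebra_simps)
    show "0 \<le> (gl t)\<^sup>2 + q t * (g t)\<^sup>2"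
      using q_nonneg_left[OF t] by simp
  qed (use assms in auto)
  then show ?thesis using g_0 by simp
qed

lemma right_energy_nonpos:
  assumes "s \<in> {x..1}" shows "g s * gr s \<le> 0"
proof -
  have "g s * gr s \<le> g 1 * gr 1"
  proof (rule deriv_nonneg_imp_mono_Icc[where a = x and b = 1 and f = "\<lambda>t. g t * gr t"
        and f' = "\<lambda>t. (gr t)\<^sup>2 + q t * (g t)\<^sup>2"])
    fix t assume t: "t \<in> {x..1}"
    show "((\<lambda>t. g t * gr t) has_real_derivative (gr t)\<^sup>2 + q t * (g t)\<^sup>2) (at t within {x..1})"
      by (rule DERIV_cong[OF DERIV_mult'[OF g_deriv_right[OF t] gr_deriv[OF t]]])
         (simp add: power2_eq_square algebra_simps)
    show "0 \<le> (gr t)\<^sup>2 + q t * (g t)\<^sup>2"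
      using q_nonneg_right[OF t] by simp
  qed (use assms in auto)
  then show ?thesis using gr_1 by simp
qed

lemma left_square_mono:
  assumes "0 \<le> s" "s \<le> t" "t \<le> x" shows "(g s)\<^sup>2 \<le> (g t)\<^sup>2"
proof (rule deriv_nonneg_imp_mono_Icc[where a = 0 and b = x and f = "\<lambda>t. (g t)\<^sup>2"
      and f' = "\<lambda>t. 2 * (g t * gl t)"])
  fix u assume u: "u \<in> {0..x}"
  show "((\<lambda>t. (g t)\<^sup>2) has_real_derivative 2 * (g u * gl u)) (at u within {0..x})"
    using g_deriv_left[OF u] by (auto intro!: derivative_eq_intros)
  show "0 \<le> 2 * (g u * gl u)" using left_energy_nonneg[OF u] by simp
qed (use assms in auto)

lemma right_square_anti:
  assumes "x \<le> s" "s \<le> t" "t \<le> 1" shows "(g t)\<^sup>2 \<le> (g s)\<^sup>2"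
proof (rule deriv_nonpos_imp_anti_Icc[where a = x and b = 1 and f = "\<lambda>t. (g t)\<^sup>2"
      and f' = "\<lambda>t. 2 * (g t * gr t)"])
  fix u assume u: "u \<in> {x..1}"
  show "((\<lambda>t. (g t)\<^sup>2) has_real_derivative 2 * (g u * gr u)) (at u within {x..1})"
    using g_deriv_right[OF u] by (auto intro!: derivative_eq_intros)
  show "2 * (g u * gr u) \<le> 0" using right_energy_nonpos[OF u] by simp
qed (use assms in auto)

(* At the pole, g < 0 would give gl(x) \<le> 0 \<le> gr(x), contradicting the jump. *)
lemma g_at_x_nonneg: "0 \<le> g x"
proof (rule ccontr)
  assume "\<not> 0 \<le> g x"
  then have neg: "g x < 0" by simp
  have "gl x \<le> 0"
    using left_energy_nonneg[of x] x_unit neg by (simp add: zero_le_mult_iff)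
  moreover have "0 \<le> gr x"
    using right_energy_nonpos[of x] x_unit neg by (simp add: mult_le_0_iff)
  ultimately show False using jump by simp
qed

(* g is nonnegative: a negative value would lie below a zero (by the intermediate
  value theorem), contradicting the monotonicity of g^2. *)
lemma g_nonneg_left:
  assumes s: "s \<in> {0..x}" shows "0 \<le> g s"
proof (rule ccontr)
  assume "\<not> 0 \<le> g s"
  then have neg: "g s < 0" by simp
  have "continuous_on {0..x} g"
    using g_deriv_left by (intro DERIV_continuous_on) auto
  then have "continuous_on {s..x} g"
    by (rule continuous_on_subset) (use s in auto)
  then obtain t where t: "s \<le> t" "t \<le> x" "g t = 0"
    using IVT'[of g s 0 x] neg g_at_x_nonneg s by auto
  then have "(g s)\<^sup>2 \<le> 0" using left_square_mono[of s t] s by simp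
  then show False using neg by (simp add: power2_eq_square mult_le_0_iff)
qed

lemma g_nonneg_right:
  assumes s: "s \<in> {x..1}" shows "0 \<le> g s"
proof (rule ccontr)
  assume "\<not> 0 \<le> g s"
  then have neg: "g s < 0" by simp
  have "continuous_on {x..1} g"
    using g_deriv_right by (intro DERIV_continuous_on) auto
  then have "continuous_on {x..s} g"
    by (rule continuous_on_subset) (use s in auto)
  then obtain t where t: "x \<le> t" "t \<le> s" "g t = 0"
    using IVT2'[of g s 0 x] neg g_at_x_nonneg s by auto
  then have "(g s)\<^sup>2 \<le> 0" using right_square_anti[of t s] s by simp
  then show False using neg by (simp add: power2_eq_square mult_le_0_iff)
qed

(* Since g'' = q g \<ge> 0, both slopes are increasing. *)
lemma gl_mono:
  assumes "0 \<le> s" "s \<le> t" "t \<le> x" shows "gl s \<le> gl t"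
  by (rule deriv_nonneg_imp_mono_Icc[where a = 0 and b = x and f' = "\<lambda>t. q t * g t"])
     (use assms gl_deriv q_nonneg_left g_nonneg_left in auto)

lemma gr_mono:
  assumes "x \<le> s" "s \<le> t" "t \<le> 1" shows "gr s \<le> gr t"
  by (rule deriv_nonneg_imp_mono_Icc[where a = x and b = 1 and f' = "\<lambda>t. q t * g t"])
     (use assms gr_deriv q_nonneg_right g_nonneg_right in auto)

lemma gr_nonpos: "s \<in> {x..1} \<Longrightarrow> gr s \<le> 0"
  using gr_mono[of s 1] gr_1 by auto

(* The left slope at the pole is nonnegative: if g(x) > 0 this is the energy
  inequality; if g(x) = 0 then g vanishes on [x,1], so gr(x) = gr(1) = 0 and gl(x) = 1. *)
lemma gl_at_x_nonneg: "0 \<le> gl x"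
proof (cases "g x = 0")
  case True
  have vanish: "g s = 0" if "s \<in> {x..1}" for s
    using right_square_anti[of x s] that True by simp
  have "gr 1 \<le> gr x"
    by (rule deriv_nonpos_imp_anti_Icc[where a = x and b = 1 and f' = "\<lambda>t. q t * g t"])
       (use gr_deriv vanish x_unit in auto)
  then show ?thesis using gr_1 jump by simp
next
  case False
  then have "0 < g x" using g_at_x_nonneg by simp
  then show ?thesis
    using left_energy_nonneg[of x] x_unit by (simp add: zero_le_mult_iff)
qed

(* The left slope at 0 is nonnegative, as the limit of the nonnegative difference
  quotients g(y)/y. *)
lemma gl_at_0_nonneg: "0 \<le> gl 0"
proof (cases "x = 0")
  case True
  then show ?thesis using gl_at_x_nonneg by simp
next
  case False
  then have "0 < x" using x_unit by simp
  then have "at 0 within {0..x} \<noteq> (bot :: real filter)"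
    by (simp add: at_within_Icc_at_right)
  moreover have "((\<lambda>y. (g y - g 0) / (y - 0)) \<longlongrightarrow> gl 0) (at 0 within {0..x})"
    using g_deriv_left[of 0] x_unit by (simp add: has_field_derivative_iff)
  moreover have "eventually (\<lambda>y. 0 \<le> (g y - g 0) / (y - 0)) (at 0 within {0..x})"
    unfolding eventually_at_filter using g_nonneg_left g_0 by (auto intro!: always_eventually)
  ultimately show ?thesis using tendsto_lowerbound by blast
qed

(* The slope bounds: 0 \<le> gl \<le> gl(x) = 1 + gr(x) \<le> 1 and -1 \<le> gr(x) \<le> gr \<le> 0. *)
lemma gl_bound: "s \<in> {0..x} \<Longrightarrow> \<bar>gl s\<bar> \<le> 1"
  using gl_mono[of 0 s] gl_mono[of s x] gl_at_0_nonneg gr_nonpos[of x] x_unit jump by auto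

lemma gr_bound: "s \<in> {x..1} \<Longrightarrow> \<bar>gr s\<bar> \<le> 1"
  using gr_mono[of x s] gr_nonpos[of s] gl_at_x_nonneg jump by auto

(* Integrating gl \<le> 1 from g(0) = 0 gives g(s) \<le> s up to the pole; beyond it g
  decreases. *)
lemma g_le_id_left:
  assumes "s \<in> {0..x}" shows "g s \<le> s"
proof -
  have "g s - s \<le> g 0 - 0"
  proof (rule deriv_nonpos_imp_anti_Icc[where a = 0 and b = x and f = "\<lambda>t. g t - t"
        and f' = "\<lambda>t. gl t - 1"])
    fix t assume t: "t \<in> {0..x}"
    show "((\<lambda>t. g t - t) has_real_derivative gl t - 1) (at t within {0..x})"
      using g_deriv_left[OF t] by (auto intro!: derivative_eq_intros)
    show "gl t - 1 \<le> 0" using gl_bound[OF t] by simp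
  qed (use assms in auto)
  then show ?thesis using g_0 by simp
qed

lemma g_le_id:
  assumes s: "s \<in> {0..1}" shows "g s \<le> s"
proof (cases "s \<le> x")
  case True
  then show ?thesis using g_le_id_left s by simp
next
  case False
  have "g s \<le> g x"
    by (rule deriv_nonpos_imp_anti_Icc[where a = x and b = 1 and f' = gr])
       (use g_deriv_right gr_nonpos False s in auto)
  then show ?thesis using g_le_id_left[of x] x_unit False by simp
qed

end

lemma green_fun_profile:
  assumes "green_fun q G GL GR" and "\<And>s. s \<in> {0..1} \<Longrightarrow> 0 \<le> q s" and "x \<in> {0..1}"
  shows "green_profile q (\<lambda>t. G t x) (\<lambda>t. GL t x) (\<lambda>t. GR t x) x"
  using assms unfolding green_fun_def green_profile_def by auto

lemma green_fun_bounds: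
  assumes green: "green_fun q G GL GR" and q: "\<And>s. s \<in> {0..1} \<Longrightarrow> 0 \<le> q s"
  shows "(\<forall>x\<in>{0..1}. (\<forall>s\<in>{0..x}. \<bar>GL s x\<bar> \<le> 1) \<and> (\<forall>s\<in>{x..1}. \<bar>GR s x\<bar> \<le> 1)) \<and>
         (\<forall>s\<in>{0<..1}. \<forall>x\<in>{0..1}. G s x / s \<le> 1)"
proof -
  have bounds: "(\<forall>s\<in>{0..x}. \<bar>GL s x\<bar> \<le> 1) \<and> (\<forall>s\<in>{x..1}. \<bar>GR s x\<bar> \<le> 1) \<and>
      (\<forall>s\<in>{0<..1}. G s x / s \<le> 1)" if x: "x \<in> {0..1}" for x
  proof -
    interpret green_profile q "\<lambda>t. G t x" "\<lambda>t. GL t x" "\<lambda>t. GR t x" x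
      using green_fun_profile[OF green q x] .
    show ?thesis using gl_bound gr_bound g_le_id by (auto simp: divide_le_eq)
  qed
  then show ?thesis by blast
qed

locale discrete_green_data =
  fixes al :: "nat \<Rightarrow> real" and n :: nat
begin

abbreviation \<beta> :: "nat \<Rightarrow> real" where "\<beta> \<equiv> dbeta al n"
abbreviation \<pi> :: "nat \<Rightarrow> nat \<Rightarrow> real" where "\<pi> \<equiv> dp al n"
abbreviation \<rho> :: "nat \<Rightarrow> real" where "\<rho> m \<equiv> al m / \<beta> (Suc m)"

definition S :: "nat \<Rightarrow> real" where
  "S k = (\<Sum>i\<in>{1..k}. (\<pi> i k)\<^sup>2 / \<beta> i)"

lemma beta_rec: "i < n \<Longrightarrow> \<beta> i = 2 - (al i)\<^sup>2 / \<beta> (Suc i)"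
proof -
  assume i: "i < n"
  then have "n - i = Suc (n - Suc i)" and "n - Suc (n - Suc i) = i" by arith+
  then show ?thesis unfolding dbeta_def by simp
qed

lemma beta_minus_1: "m < n \<Longrightarrow> \<beta> m - 1 = 1 - al m * \<rho> m"
  by (simp add: beta_rec power2_eq_square)

lemma pi_refl: "\<pi> i i = 1"
  by (simp add: dp_def)

lemma pi_Suc: "i \<le> m \<Longrightarrow> \<pi> i (Suc m) = \<pi> i m * \<rho> m"
  by (simp add: dp_def prod.atLeastLessThan_Suc)

lemma pi_split: "i \<le> k \<Longrightarrow> k \<le> j \<Longrightarrow> \<pi> i j = \<pi> i k * \<pi> k j"
  by (simp add: dp_def prod.atLeastLessThan_concat)

lemma S_0: "S 0 = 0"
  by (simp add: S_def)

lemma S_Suc: "S (Suc k) = (\<rho> k)\<^sup>2 * S k + 1 / \<beta> (Suc k)"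
proof -
  have "S (Suc k) = (\<Sum>i\<in>{1..k}. (\<pi> i (Suc k))\<^sup>2 / \<beta> i) + 1 / \<beta> (Suc k)"
    by (simp add: S_def pi_refl)
  also have "(\<Sum>i\<in>{1..k}. (\<pi> i (Suc k))\<^sup>2 / \<beta> i) = (\<Sum>i\<in>{1..k}. (\<rho> k)\<^sup>2 * ((\<pi> i k)\<^sup>2 / \<beta> i))"
    by (intro sum.cong) (simp_all add: pi_Suc power_mult_distrib power_divide)
  also have "\<dots> = (\<rho> k)\<^sup>2 * S k"
    by (simp add: S_def sum_distrib_left)
  finally show ?thesis .
qed

(* The defining sum of G factors through S, because p_ib = p_ia p_ab for i \<le> a \<le> b. *)
lemma kernel_sum:
  assumes "a \<le> b" shows "(\<Sum>i\<in>{1..a}. \<pi> i a * \<pi> i b / \<beta> i) = \<pi> a b * S a"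
proof -
  have "\<pi> i a * \<pi> i b / \<beta> i = \<pi> a b * ((\<pi> i a)\<^sup>2 / \<beta> i)" if "i \<in> {1..a}" for i
    using pi_split[of i a b] that assms by (simp add: power2_eq_square)
  then have "(\<Sum>i\<in>{1..a}. \<pi> i a * \<pi> i b / \<beta> i) = (\<Sum>i\<in>{1..a}. \<pi> a b * ((\<pi> i a)\<^sup>2 / \<beta> i))"
    by (rule sum.cong[OF refl])
  then show ?thesis by (simp add: S_def sum_distrib_left)
qed

lemma green_below_diagonal:
  "0 < n \<Longrightarrow> k \<le> j \<Longrightarrow> real n * dgreen al n k j = \<pi> k j * S k"
  using kernel_sum[of k j] by (auto simp: dgreen_def S_0 min_absorb2 mult.commute)

lemma green_above_diagonal:
  "0 < n \<Longrightarrow> j \<le> k \<Longrightarrow> real n * dgreen al n k j = \<pi> j k * S j"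
  using kernel_sum[of j k] by (auto simp: dgreen_def S_0 min_absorb1 mult.commute)

end

locale discrete_green = discrete_green_data +
  assumes al_nonneg: "\<And>m. 1 \<le> m \<Longrightarrow> m < n \<Longrightarrow> 0 \<le> al m"
    and al_le_1: "\<And>m. 1 \<le> m \<Longrightarrow> m < n \<Longrightarrow> al m \<le> 1"
begin

lemma beta_ge_1:
  assumes "i \<le> n" "1 \<le> i" shows "1 \<le> \<beta> i"
  using assms
proof (induction i rule: inc_induct)
  case base
  then show ?case by (simp add: dbeta_def)
next
  case (step i)
  have "(al i)\<^sup>2 \<le> 1"
    using al_nonneg[of i] al_le_1[of i] step by (simp add: power_le_one)
  moreover have "1 \<le> \<beta> (Suc i)" using step by simp
  ultimately have "(al i)\<^sup>2 / \<beta> (Suc i) \<le> 1" by (simp add: divide_le_eq_1)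
  then show ?case using beta_rec[of i] step by simp
qed

lemma rho_bounds:
  assumes "1 \<le> m" "m < n" shows "0 \<le> \<rho> m" "\<rho> m \<le> al m"
proof -
  have "1 \<le> \<beta> (Suc m)" using beta_ge_1[of "Suc m"] assms by simp
  moreover have "0 \<le> al m" using al_nonneg assms by simp
  ultimately show "0 \<le> \<rho> m" "\<rho> m \<le> al m"
    by (simp_all add: divide_le_eq mult_le_cancel_left1)
qed

lemma pi_bounds:
  assumes "1 \<le> i" "j \<le> n" shows "0 \<le> \<pi> i j" "\<pi> i j \<le> 1"
proof -
  have "0 \<le> \<rho> m \<and> \<rho> m \<le> 1" if "m \<in> {i..<j}" for m
    using rho_bounds[of m] al_le_1[of m] that assms by force
  then show "0 \<le> \<pi> i j" "\<pi> i j \<le> 1"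
    unfolding dp_def by (auto intro: prod_nonneg prod_le_1)
qed

lemma S_nonneg:
  assumes "k \<le> n" shows "0 \<le> S k"
proof -
  have "0 \<le> \<beta> i" if "i \<in> {1..k}" for i
    using beta_ge_1[of i] that assms by simp
  then show ?thesis unfolding S_def by (auto intro!: sum_nonneg divide_nonneg_nonneg)
qed

(* The key estimate (beta_k - 1) S_k \<le> 1, by induction on k: the recursion for S
  reduces it to (beta_(k+1) - 1) alpha_k rho_k \<le> beta_k - 1, i.e. to alpha_k^2 \<le> 1. *)
lemma beta_S_bound: "k \<le> n \<Longrightarrow> (\<beta> k - 1) * S k \<le> 1"
proof (induction k)
  case 0
  then show ?case by (simp add: S_0)
next
  case (Suc k)
  define c where "c = \<beta> (Suc k)"
  have c: "1 \<le> c" using beta_ge_1[of "Suc k"] Suc.prems c_def by simp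
  have damped: "(c - 1) * (al k * \<rho> k) * S k \<le> 1"
  proof (cases "k = 0")
    case False
    have "(c - 1) * (al k * \<rho> k) = (al k)\<^sup>2 - al k * \<rho> k"
      using c by (simp add: c_def field_simps power2_eq_square)
    also have "\<dots> \<le> \<beta> k - 1"
      using beta_minus_1[of k] al_nonneg[of k] al_le_1[of k] False Suc.prems
      by (simp add: power_le_one)
    finally show ?thesis
      using Suc S_nonneg[of k] by (meson Suc_leD mult_right_mono order_trans)
  qed (simp add: S_0)
  have "(c - 1) * S (Suc k) = ((c - 1) * (al k * \<rho> k) * S k + (c - 1)) / c"
    using c by (simp add: S_Suc c_def field_simps power2_eq_square)
  also have "\<dots> \<le> (1 + (c - 1)) / c"
    using damped c by (simp add: divide_right_mono)
  finally show ?case using c by (simp add: c_def)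
qed

(* The estimate survives multiplication by the products p_jm, since
  rho_m (beta_(m+1) - 1) = alpha_m - rho_m \<le> 1 - alpha_m rho_m = beta_m - 1. *)
lemma propagated_bound:
  assumes "1 \<le> j" "j \<le> m" "m \<le> n"
  shows "\<pi> j m * S j * (\<beta> m - 1) \<le> 1"
  using assms(2,3)
proof (induction m rule: dec_induct)
  case base
  then show ?case using beta_S_bound[of j] by (simp add: pi_refl mult.commute)
next
  case (step k)
  have k: "1 \<le> k" "k < n" using assms(1) step by simp_all
  have "al k * (1 + \<rho> k) \<le> 1 + \<rho> k"
    using al_le_1[OF k] rho_bounds[OF k] by (simp add: mult_left_le_one_le)
  moreover have "\<rho> k * (\<beta> (Suc k) - 1) = al k - \<rho> k"
    using beta_ge_1[of "Suc k"] k by (simp add: field_simps)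
  ultimately have gap: "\<rho> k * (\<beta> (Suc k) - 1) \<le> \<beta> k - 1"
    using beta_minus_1[of k] k by (simp add: algebra_simps)
  have "0 \<le> \<pi> j k * S j"
    using pi_bounds[of j k] S_nonneg[of j] assms(1) step by simp
  then have "\<pi> j k * S j * (\<rho> k * (\<beta> (Suc k) - 1)) \<le> \<pi> j k * S j * (\<beta> k - 1)"
    by (rule mult_left_mono[OF gap])
  moreover have "\<pi> j (Suc k) * S j * (\<beta> (Suc k) - 1) = \<pi> j k * S j * (\<rho> k * (\<beta> (Suc k) - 1))"
    using step.hyps by (simp add: pi_Suc)
  ultimately have "\<pi> j (Suc k) * S j * (\<beta> (Suc k) - 1) \<le> \<pi> j k * S j * (\<beta> k - 1)"
    by simp
  then show ?case using step by simp
qed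

(* The quantity (rho_m - rho_m^2) S_m lies in [0,1], because
  rho_m - rho_m^2 \<le> 1 - rho_m \<le> beta_m - 1. *)
lemma damped_S_bound:
  assumes "m < n" shows "0 \<le> (\<rho> m - (\<rho> m)\<^sup>2) * S m \<and> (\<rho> m - (\<rho> m)\<^sup>2) * S m \<le> 1"
proof (cases "m = 0")
  case True
  then show ?thesis by (simp add: S_0)
next
  case False
  then have m: "1 \<le> m" "m < n" using assms by simp_all
  have S: "0 \<le> S m" using S_nonneg[of m] m by simp
  have "\<rho> m \<le> 1" using rho_bounds[OF m] al_le_1[OF m] by simp
  then have "0 \<le> \<rho> m - (\<rho> m)\<^sup>2"
    using mult_left_le_one_le[of "\<rho> m" "\<rho> m"] rho_bounds[OF m] by (simp add: power2_eq_square)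
  then have lower: "0 \<le> (\<rho> m - (\<rho> m)\<^sup>2) * S m" using S by simp
  have "al m * \<rho> m \<le> \<rho> m"
    using mult_left_le_one_le[of "\<rho> m" "al m"] rho_bounds[OF m] al_nonneg[OF m] al_le_1[OF m]
    by simp
  moreover have "0 \<le> 1 - 2 * \<rho> m + (\<rho> m)\<^sup>2"
    using zero_le_power2[of "1 - \<rho> m"] by (simp only: power2_diff) simp
  ultimately have gap: "\<rho> m - (\<rho> m)\<^sup>2 \<le> \<beta> m - 1"
    using beta_minus_1[of m] m by linarith
  have "(\<rho> m - (\<rho> m)\<^sup>2) * S m \<le> (\<beta> m - 1) * S m"
    by (rule mult_right_mono[OF gap S])
  then show ?thesis using lower beta_S_bound[of m] m by simp
qed

(* Below the diagonal the increment is p_kj (1/beta_k - (rho_m - rho_m^2) S_m) with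
  k = m + 1: a number in [0,1] times a difference of two numbers in [0,1]. *)
lemma increment_below_diagonal:
  assumes "Suc m \<le> j" "j \<le> n"
  shows "\<bar>real n * dgreen al n (Suc m) j - real n * dgreen al n m j\<bar> \<le> 1"
proof -
  have n: "0 < n" using assms by simp
  define D where "D = (\<rho> m - (\<rho> m)\<^sup>2) * S m"
  have "real n * dgreen al n (Suc m) j = \<pi> (Suc m) j * ((\<rho> m)\<^sup>2 * S m + 1 / \<beta> (Suc m))"
    using green_below_diagonal[OF n assms(1)] by (simp add: S_Suc)
  moreover have "real n * dgreen al n m j = \<pi> (Suc m) j * (\<rho> m * S m)"
    using green_below_diagonal[OF n, of m j] pi_split[of m "Suc m" j] assms
    by (simp add: pi_Suc pi_refl)
  ultimately have diff: "real n * dgreen al n (Suc m) j - real n * dgreen al n m j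
      = \<pi> (Suc m) j * (1 / \<beta> (Suc m) - D)"
    by (simp add: D_def algebra_simps)
  have "0 \<le> 1 / \<beta> (Suc m)" "1 / \<beta> (Suc m) \<le> 1"
    using beta_ge_1[of "Suc m"] assms by simp_all
  moreover have "0 \<le> D" "D \<le> 1" using damped_S_bound[of m] assms D_def by simp_all
  ultimately have "\<bar>1 / \<beta> (Suc m) - D\<bar> \<le> 1" by linarith
  moreover have "0 \<le> \<pi> (Suc m) j" "\<pi> (Suc m) j \<le> 1" using pi_bounds[of "Suc m" j] assms by simp_all
  ultimately show ?thesis unfolding diff by (simp add: abs_mult mult_le_one)
qed

(* Above the diagonal the increment is -P (1 - rho_m) with P = p_jm S_j \<ge> 0, and
  P (1 - rho_m) \<le> P (beta_m - 1) \<le> 1. *)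
lemma increment_above_diagonal:
  assumes "1 \<le> j" "j \<le> m" "Suc m \<le> n"
  shows "\<bar>real n * dgreen al n (Suc m) j - real n * dgreen al n m j\<bar> \<le> 1"
proof -
  have n: "0 < n" and m: "1 \<le> m" "m < n" using assms by simp_all
  define P where "P = \<pi> j m * S j"
  have P: "0 \<le> P" using pi_bounds[of j m] S_nonneg[of j] assms P_def by simp
  have "real n * dgreen al n (Suc m) j = P * \<rho> m"
    using green_above_diagonal[OF n, of j "Suc m"] assms by (simp add: P_def pi_Suc)
  moreover have "real n * dgreen al n m j = P"
    using green_above_diagonal[OF n, of j m] assms by (simp add: P_def)
  moreover have "P * (1 - \<rho> m) \<le> P * (1 - al m * \<rho> m)"
    using mult_left_le_one_le[of "\<rho> m" "al m"] P rho_bounds[OF m] al_nonneg[OF m] al_le_1[OF m]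
    by (intro mult_left_mono) auto
  moreover have "P * (1 - al m * \<rho> m) \<le> 1"
    using propagated_bound[of j m] beta_minus_1[of m] assms by (simp add: P_def mult.commute)
  moreover have "0 \<le> P * (1 - \<rho> m)"
    using P rho_bounds[OF m] al_le_1[OF m] by simp
  ultimately show ?thesis by (simp add: algebra_simps abs_le_iff)
qed

lemma increment_bound:
  assumes "1 \<le> j" "j \<le> n" "1 \<le> k" "k \<le> n"
  shows "\<bar>real n * (dgreen al n k j - dgreen al n (k - 1) j)\<bar> \<le> 1"
proof -
  obtain m where k: "k = Suc m" using assms by (cases k) auto
  have "\<bar>real n * dgreen al n (Suc m) j - real n * dgreen al n m j\<bar> \<le> 1"
    using increment_below_diagonal[of m j] increment_above_diagonal[of j m] assms k
    by (cases "Suc m \<le> j") auto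
  then show ?thesis by (simp add: k right_diff_distrib)
qed

lemma green_le_index:
  assumes "1 \<le> j" "j \<le> n" "k \<le> n" shows "real n * dgreen al n k j \<le> real k"
  using assms(3)
proof (induction k)
  case 0
  then show ?case by (simp add: dgreen_def)
next
  case (Suc k)
  then show ?case using increment_bound[of j "Suc k"] assms by (simp add: right_diff_distrib)
qed

end

(* The discrete hypotheses of the theorem imply 0 \<le> alpha_m \<le> 1: the lower bound
  is assumed and the upper one is Cauchy-Schwarz for the unit difference quotients. *)
lemma unit_gradients_discrete_green:
  fixes eta :: "nat \<Rightarrow> 'a::real_inner"
  assumes unit: "\<forall>k\<in>{1..n}. norm (dgrad n eta k) = 1"
    and nonneg: "\<forall>k\<in>{1..n-1}. 0 \<le> dalpha n eta k"
  shows "discrete_green (dalpha n eta) n"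
proof
  fix m assume m: "1 \<le> m" "m < n"
  then show "0 \<le> dalpha n eta m" using nonneg by simp
  have "dalpha n eta m \<le> norm (dgrad n eta (Suc m)) * norm (dgrad n eta m)"
    unfolding dalpha_def by (rule norm_cauchy_schwarz)
  then show "dalpha n eta m \<le> 1" using unit m by simp
qed

theorem proposition3p3:
  shows "(\<forall>(eta :: real \<Rightarrow> 'a::euclidean_space) D G GL GR.
            smooth_with_derivs D eta \<and> green_fun (\<lambda>s. (norm (D 2 s))\<^sup>2) G GL GR \<longrightarrow>
              (\<forall>x\<in>{0..1}. (\<forall>s\<in>{0..x}. \<bar>GL s x\<bar> \<le> 1) \<and> (\<forall>s\<in>{x..1}. \<bar>GR s x\<bar> \<le> 1)) \<and>
              (\<forall>s\<in>{0<..1}. \<forall>x\<in>{0..1}. G s x / s \<le> 1))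
       \<and> (\<forall>(n :: nat) (eta :: nat \<Rightarrow> 'b::euclidean_space).
            eta (Suc n) = 0 \<and>
            (\<forall>k\<in>{1..n}. norm (dgrad n eta k) = 1) \<and>
            (\<forall>k\<in>{1..n-1}. dalpha n eta k \<ge> 0) \<longrightarrow>
              (\<forall>j\<in>{1..n}. \<forall>k\<in>{1..n}.
                 \<bar>real n * (dgreen (dalpha n eta) n k j - dgreen (dalpha n eta) n (k - 1) j)\<bar> \<le> 1 \<and>
                 real n * dgreen (dalpha n eta) n k j / real k \<le> 1))"
proof (rule conjI; intro allI impI)
  fix eta :: "real \<Rightarrow> 'a" and D G GL GR
  assume "smooth_with_derivs D eta \<and> green_fun (\<lambda>s. (norm (D 2 s))\<^sup>2) G GL GR"
  then show "(\<forall>x\<in>{0..1}. (\<forall>s\<in>{0..x}. \<bar>GL s x\<bar> \<le> 1) \<and> (\<forall>s\<in>{x..1}. \<bar>GR s x\<bar> \<le> 1)) \<and>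
      (\<forall>s\<in>{0<..1}. \<forall>x\<in>{0..1}. G s x / s \<le> 1)"
    by (intro green_fun_bounds) auto
next
  fix n and eta :: "nat \<Rightarrow> 'b"
  assume "eta (Suc n) = 0 \<and> (\<forall>k\<in>{1..n}. norm (dgrad n eta k) = 1) \<and>
      (\<forall>k\<in>{1..n-1}. dalpha n eta k \<ge> 0)"
  then interpret discrete_green "dalpha n eta" n
    by (intro unit_gradients_discrete_green) auto
  show "\<forall>j\<in>{1..n}. \<forall>k\<in>{1..n}.
      \<bar>real n * (dgreen (dalpha n eta) n k j - dgreen (dalpha n eta) n (k - 1) j)\<bar> \<le> 1 \<and>
      real n * dgreen (dalpha n eta) n k j / real k \<le> 1"
    using increment_bound green_le_index by (auto simp: divide_le_eq)
qed

end
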